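(* Fix $i\in\{1,2,3\}$ and constants $\sigma>0,\lambda>0,\rho>0$ with $\rho^{-2}\sigma<1$ and $\rho\le\lambda-2\rho^{-1}\sigma(1-\rho^{-2}\sigma)^{-1}$. Suppose that for some $p\in\mathbb{Z}_{>0}$ the matrix $\Theta_{p,i}$ satisfies $\Theta_{p,i}^{12}\Theta_{p,i}^{21}\le\sigma I$, $\Theta_{p,i}^{21}\Theta_{p,i}^{12}\le\sigma I$, $\Theta_{p,i}^{11}+\Theta_{p,i}^{22}\ge\lambda I$. Then for all $k\in\mathbb{Z}_{>0}$, $\Theta_{(k+1)p,i}^{11}\le\Theta_{kp,i}^{11}$, $\Theta_{(k+1)p,i}^{22}\le\Theta_{kp,i}^{22}$, $\Theta_{(k+1)p,i}^{12}\Theta_{(k+1)p,i}^{21}\le\Theta_{kp,i}^{12}\Theta_{kp,i}^{21}$, and $\Theta_{(k+1)p,i}^{21}\Theta_{(k+1)p,i}^{12}\le\Theta_{kp,i}^{21}\Theta_{kp,i}^{12}$.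
   Context: For the linear regulator problem with dynamics $x_{k+1}=Ax_k+Bw_k$ ($x_k\in\mathbb{R}^n$), running payoff $\tfrac12x^T\Phi x-\tfrac{\gamma^2}{2}|w|^2$ and basis functions $\psi^1(x,z)=z^Tx$, $\psi^2(x,z)=-\tfrac12(x-z)^TM(x-z)$, $\psi^3(x,z)=\delta(x-z)$, let $\mathrm{S}_{k,i}(x,z)$ be the $k$-step dynamic programming evolution of $\psi^i(\cdot,z)$ evaluated at $x$, and $\mathrm{B}_{k,i}(y,z)=-\sup_x\{\psi^i(x,y)-\mathrm{S}_{k,i}(x,z)\}=-\tfrac12[y;z]^T\Theta_{k,i}[y;z]$, with $\Theta_{k,i}=\begin{bmatrix}\Theta_{k,i}^{11}&\Theta_{k,i}^{12}\\\Theta_{k,i}^{21}&\Theta_{k,i}^{22}\end{bmatrix}$ symmetric ($n\times n$ blocks). These matrices satisfy $\Theta_{k_1+k_2,i}=\Theta_{k_1,i}\circledast\Theta_{k_2,i}$, where for symmetric $\Omega_1,\Omega_2\in\mathbb{R}^{2n\times2n}$ with $\Omega_1^{22}+\Omega_2^{11}>0$, $\Omega_1\circledast\Omega_2=\begin{bmatrix}\Omega_1^{11}&0\\0&\Omega_2^{22}\end{bmatrix}-\begin{bmatrix}\Omega_1^{12}\\\Omega_2^{21}\end{bmatrix}(\Omega_1^{22}+\Omega_2^{11})^{-1}\begin{bmatrix}\Omega_1^{21}&\Omega_2^{12}\end{bmatrix}$. *)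

theory Defs
  imports "HOL-Analysis.Analysis"
begin

text \<open>Real 2n x 2n matrices are represented as real^('n+'n)^('n+'n); the first copy
  of 'n (Inl) indexes the first block row/column, the second copy (Inr) the second.\<close>

definition blk11 :: "real^('n::finite + 'n)^('n + 'n) \<Rightarrow> real^'n^'n" where
  "blk11 M = (\<chi> i j. M $ Inl i $ Inl j)"
definition blk12 :: "real^('n::finite + 'n)^('n + 'n) \<Rightarrow> real^'n^'n" where
  "blk12 M = (\<chi> i j. M $ Inl i $ Inr j)"
definition blk21 :: "real^('n::finite + 'n)^('n + 'n) \<Rightarrow> real^'n^'n" where
  "blk21 M = (\<chi> i j. M $ Inr i $ Inl j)"
definition blk22 :: "real^('n::finite + 'n)^('n + 'n) \<Rightarrow> real^'n^'n" where
  "blk22 M = (\<chi> i j. M $ Inr i $ Inr j)"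

definition blocks :: "real^'n^'n \<Rightarrow> real^'n^'n \<Rightarrow> real^'n^'n \<Rightarrow> real^'n^'n
    \<Rightarrow> real^('n::finite + 'n)^('n + 'n)" where
  "blocks A B C D = (\<chi> r s. case r of
       Inl i \<Rightarrow> (case s of Inl j \<Rightarrow> A $ i $ j | Inr j \<Rightarrow> B $ i $ j)
     | Inr i \<Rightarrow> (case s of Inl j \<Rightarrow> C $ i $ j | Inr j \<Rightarrow> D $ i $ j))"

definition loewner_le :: "real^'n^'n \<Rightarrow> real^'n^'n \<Rightarrow> bool" (infix "\<preceq>\<^sub>L" 50) where
  "A \<preceq>\<^sub>L B \<longleftrightarrow> (\<forall>x::real^'n. x \<bullet> (A *v x) \<le> x \<bullet> (B *v x))"

definition pos_def :: "real^'n^'n \<Rightarrow> bool" where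
  "pos_def A \<longleftrightarrow> transpose A = A \<and> (\<forall>x::real^'n. x \<noteq> 0 \<longrightarrow> 0 < x \<bullet> (A *v x))"

definition circstar :: "real^('n::finite + 'n)^('n + 'n) \<Rightarrow> real^('n + 'n)^('n + 'n)
    \<Rightarrow> real^('n + 'n)^('n + 'n)" (infixl "\<circledast>" 70) where
  "O1 \<circledast> O2 = (let S = matrix_inv (blk22 O1 + blk11 O2) in
     blocks (blk11 O1 - blk12 O1 ** S ** blk21 O1)
            (- (blk12 O1 ** S ** blk12 O2))
            (- (blk21 O2 ** S ** blk21 O1))
            (blk22 O2 - blk21 O2 ** S ** blk12 O2))"

end

theory Submission
  imports Defs
begin

text \<open>Since \<open>\<Theta>((k+1)p) = \<Theta>(kp) \<circledast> \<Theta>(p) = \<Theta>(p) \<circledast> \<Theta>(kp)\<close>, every block of \<open>\<Theta>((k+1)p)\<close>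
  is formed from blocks of the two factors and the inverse \<open>S\<close> of the denominator \<open>D\<close>
  (block 22 of the left factor plus block 11 of the right one). If \<open>\<rho>I \<le> D\<close>, then
  \<open>0 \<le> S \<le> (1/\<rho>)I\<close> and \<open>S\<^sup>2 \<le> (1/\<rho>\<^sup>2)I\<close>. The diagonal blocks lose a term \<open>B S B\<^sup>T \<ge> 0\<close>, so they
  decrease; the off-diagonal products become \<open>B (S Q S) B\<^sup>T\<close> with \<open>Q \<le> \<sigma>I\<close>, and
  \<open>S Q S \<le> (\<sigma>/\<rho>\<^sup>2)I \<le> I\<close>. The bound \<open>\<rho>I \<le> D\<close> propagates along \<open>k\<close>: the next denominator is
  \<open>\<Theta>(p)\<^sub>1\<^sub>1 + \<Theta>(p)\<^sub>2\<^sub>2 \<ge> \<lambda>I\<close> minus a term \<open>B S B\<^sup>T \<le> (\<sigma>/\<rho>)I\<close>, and \<open>\<lambda> - \<sigma>/\<rho> \<ge> \<rho>\<close>.\<close>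

lemma inner_matrix_vector_transpose: "x \<bullet> (A *v y) = (transpose A *v x) \<bullet> (y::real^'n)"
  by (simp add: dot_lmul_matrix)

lemma inner_congruence:
  "(x::real^'n) \<bullet> ((B ** S ** transpose B) *v x) = (transpose B *v x) \<bullet> (S *v (transpose B *v x))"
  by (simp only: matrix_vector_mul_assoc[symmetric] inner_matrix_vector_transpose[of x B])

lemma inner_scaleR_mat_1: "(x::real^'n) \<bullet> ((c *\<^sub>R mat 1) *v x) = c * (x \<bullet> x)"
  by (subst scaleR_matrix_vector_assoc[symmetric]) simp

lemma uminus_matrix_mul_uminus: "(- A) ** (- B) = (A :: 'a::ring_1^'n^'m) ** B"
  by (simp add: vec_eq_iff matrix_matrix_mult_def sum_negf)

lemma transpose_add: "transpose (A + B) = transpose A + transpose B"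
  by (simp add: vec_eq_iff transpose_def)

lemma loewner_le_trans [trans]: "A \<preceq>\<^sub>L B \<Longrightarrow> B \<preceq>\<^sub>L C \<Longrightarrow> A \<preceq>\<^sub>L C"
  unfolding loewner_le_def by (meson order_trans)

lemma loewner_le_diff: "A \<preceq>\<^sub>L B \<Longrightarrow> C \<preceq>\<^sub>L D \<Longrightarrow> A - D \<preceq>\<^sub>L B - C"
  unfolding loewner_le_def by (simp add: matrix_vector_mult_diff_rdistrib inner_diff_right diff_mono)

lemma loewner_le_scaleR: "A \<preceq>\<^sub>L B \<Longrightarrow> 0 \<le> c \<Longrightarrow> c *\<^sub>R A \<preceq>\<^sub>L c *\<^sub>R B"
  unfolding loewner_le_def by (metis scaleR_matrix_vector_assoc inner_scaleR_right mult_left_mono)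

lemma loewner_le_congruence: "S \<preceq>\<^sub>L T \<Longrightarrow> B ** S ** transpose B \<preceq>\<^sub>L B ** T ** transpose B"
  unfolding loewner_le_def by (simp add: inner_congruence)

lemma loewner_le_diff_congruence: "0 \<preceq>\<^sub>L S \<Longrightarrow> A - B ** S ** transpose B \<preceq>\<^sub>L A"
  unfolding loewner_le_def
  by (simp add: matrix_vector_mult_diff_rdistrib inner_diff_right inner_congruence)

lemma scaleR_mat_1_loewner_le_mono: "a \<le> b \<Longrightarrow> a *\<^sub>R mat 1 \<preceq>\<^sub>L b *\<^sub>R mat 1"
  unfolding loewner_le_def by (simp add: inner_scaleR_mat_1 mult_right_mono)

lemma congruence_scaleR_mat_1:
  "(B::real^'n^'m) ** (c *\<^sub>R mat 1) ** transpose B = c *\<^sub>R (B ** transpose B)"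
  by (simp only: matrix_scalar_ac matrix_mul_rid scalar_matrix_assoc[symmetric])

lemma scaleR_mat_1_loewner_le_diff:
  assumes "a *\<^sub>R mat 1 \<preceq>\<^sub>L A" "C \<preceq>\<^sub>L c *\<^sub>R mat 1" "b \<le> a - c"
  shows "b *\<^sub>R mat 1 \<preceq>\<^sub>L A - C"
proof -
  have "b *\<^sub>R mat 1 \<preceq>\<^sub>L a *\<^sub>R mat 1 - c *\<^sub>R (mat 1 :: real^'n^'n)"
    using scaleR_mat_1_loewner_le_mono[OF assms(3)] by (simp add: scaleR_diff_left)
  also have "\<dots> \<preceq>\<^sub>L A - C"
    using assms(1,2) by (rule loewner_le_diff)
  finally show ?thesis .
qed

lemma uniformly_pos_norm_le:
  fixes M :: "real^'n^'n"
  assumes "rho *\<^sub>R mat 1 \<preceq>\<^sub>L M"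
  shows "rho * norm x \<le> norm (M *v x)"
proof (cases "x = 0")
  case False
  have "rho * (norm x)\<^sup>2 \<le> x \<bullet> (M *v x)"
    using assms by (simp add: loewner_le_def inner_scaleR_mat_1 power2_norm_eq_inner)
  also have "\<dots> \<le> norm x * norm (M *v x)"
    by (rule norm_cauchy_schwarz)
  finally have "norm x * (rho * norm x) \<le> norm x * norm (M *v x)"
    by (simp add: power2_eq_square mult_ac)
  then show ?thesis
    using False by simp
qed simp

lemma uniformly_pos_matrix_inv:
  fixes M :: "real^'n^'n"
  assumes "0 < rho" "rho *\<^sub>R mat 1 \<preceq>\<^sub>L M"
  shows "M ** matrix_inv M = mat 1" "matrix_inv M ** M = mat 1"
proof -
  have "x = 0" if "M *v x = 0" for x
  proof -
    have "rho * norm x \<le> 0"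
      using uniformly_pos_norm_le[OF assms(2), of x] that by simp
    then show ?thesis
      using assms(1) by (simp add: mult_le_0_iff)
  qed
  then have "invertible M"
    using matrix_left_invertible_ker invertible_left_inverse by blast
  then have "M ** matrix_inv M = mat 1 \<and> matrix_inv M ** M = mat 1"
    unfolding invertible_def matrix_inv_def by (rule someI_ex)
  then show "M ** matrix_inv M = mat 1" "matrix_inv M ** M = mat 1"
    by auto
qed

lemma uniformly_pos_matrix_inv_norm_le:
  fixes M :: "real^'n^'n"
  assumes "0 < rho" "rho *\<^sub>R mat 1 \<preceq>\<^sub>L M"
  shows "norm (matrix_inv M *v y) \<le> norm y / rho"
  using uniformly_pos_norm_le[OF assms(2), of "matrix_inv M *v y"] assms(1)
  by (simp add: matrix_vector_mul_assoc uniformly_pos_matrix_inv[OF assms] field_simps)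

lemma uniformly_pos_matrix_inv_nonneg:
  fixes M :: "real^'n^'n"
  assumes "0 < rho" "rho *\<^sub>R mat 1 \<preceq>\<^sub>L M"
  shows "0 \<preceq>\<^sub>L matrix_inv M"
  unfolding loewner_le_def
proof
  fix y :: "real^'n"
  define z where "z = matrix_inv M *v y"
  have Mz: "M *v z = y"
    by (simp add: z_def matrix_vector_mul_assoc uniformly_pos_matrix_inv[OF assms])
  have "0 \<le> rho * (z \<bullet> z)"
    using assms(1) by simp
  also have "\<dots> \<le> z \<bullet> (M *v z)"
    using assms(2) by (simp add: loewner_le_def inner_scaleR_mat_1)
  also have "\<dots> = y \<bullet> (matrix_inv M *v y)"
    by (subst Mz) (simp only: z_def inner_commute)
  finally show "y \<bullet> (0 *v y) \<le> y \<bullet> (matrix_inv M *v y)"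
    by simp
qed

lemma uniformly_pos_matrix_inv_le:
  fixes M :: "real^'n^'n"
  assumes "0 < rho" "rho *\<^sub>R mat 1 \<preceq>\<^sub>L M"
  shows "matrix_inv M \<preceq>\<^sub>L (1 / rho) *\<^sub>R mat 1"
  unfolding loewner_le_def
proof
  fix y :: "real^'n"
  have "y \<bullet> (matrix_inv M *v y) \<le> norm y * norm (matrix_inv M *v y)"
    by (rule norm_cauchy_schwarz)
  also have "\<dots> \<le> norm y * (norm y / rho)"
    by (intro mult_left_mono uniformly_pos_matrix_inv_norm_le[OF assms]) simp
  also have "\<dots> = y \<bullet> (((1 / rho) *\<^sub>R mat 1) *v y)"
    by (simp add: inner_scaleR_mat_1 power2_norm_eq_inner[symmetric] power2_eq_square)
  finally show "y \<bullet> (matrix_inv M *v y) \<le> y \<bullet> (((1 / rho) *\<^sub>R mat 1) *v y)" .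
qed

lemma symmetric_inverse:
  fixes M A :: "real^'n^'n"
  assumes "M ** A = mat 1" "A ** M = mat 1" "transpose M = M"
  shows "transpose A = A"
proof -
  have "transpose A ** M = mat 1"
    using assms by (metis matrix_transpose_mul transpose_mat)
  then have "transpose A = transpose A ** (M ** A)"
    using assms by simp
  also have "\<dots> = A"
    by (simp add: matrix_mul_assoc \<open>transpose A ** M = mat 1\<close>)
  finally show ?thesis .
qed

lemma uniformly_pos_matrix_inv_square_le:
  fixes M :: "real^'n^'n"
  assumes "0 < rho" "rho *\<^sub>R mat 1 \<preceq>\<^sub>L M" "transpose M = M"
  shows "matrix_inv M ** matrix_inv M \<preceq>\<^sub>L (1 / rho\<^sup>2) *\<^sub>R mat 1"
  unfolding loewner_le_def
proof
  fix y :: "real^'n"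
  let ?S = "matrix_inv M"
  have "transpose ?S = ?S"
    using symmetric_inverse uniformly_pos_matrix_inv[OF assms(1,2)] assms(3) by blast
  then have "y \<bullet> ((?S ** ?S) *v y) = (norm (?S *v y))\<^sup>2"
    by (metis matrix_vector_mul_assoc inner_matrix_vector_transpose power2_norm_eq_inner)
  also have "\<dots> \<le> (norm y / rho)\<^sup>2"
    by (intro power_mono uniformly_pos_matrix_inv_norm_le[OF assms(1,2)]) simp
  also have "\<dots> = y \<bullet> (((1 / rho\<^sup>2) *\<^sub>R mat 1) *v y)"
    by (simp add: inner_scaleR_mat_1 power2_norm_eq_inner[symmetric] power_divide)
  finally show "y \<bullet> ((?S ** ?S) *v y) \<le> y \<bullet> (((1 / rho\<^sup>2) *\<^sub>R mat 1) *v y)" .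
qed

lemma blk_blocks [simp]:
  "blk11 (blocks A B C D) = A" "blk12 (blocks A B C D) = B"
  "blk21 (blocks A B C D) = C" "blk22 (blocks A B C D) = D"
  by (simp_all add: blk11_def blk12_def blk21_def blk22_def blocks_def vec_eq_iff)

lemma blk_circstar:
  "blk11 (O1 \<circledast> O2) = blk11 O1 - blk12 O1 ** matrix_inv (blk22 O1 + blk11 O2) ** blk21 O1"
  "blk12 (O1 \<circledast> O2) = - (blk12 O1 ** matrix_inv (blk22 O1 + blk11 O2) ** blk12 O2)"
  "blk21 (O1 \<circledast> O2) = - (blk21 O2 ** matrix_inv (blk22 O1 + blk11 O2) ** blk21 O1)"
  "blk22 (O1 \<circledast> O2) = blk22 O2 - blk21 O2 ** matrix_inv (blk22 O1 + blk11 O2) ** blk12 O2"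
  by (simp_all add: circstar_def Let_def)

lemma transpose_blk:
  "transpose (blk11 M) = blk11 (transpose M)" "transpose (blk12 M) = blk21 (transpose M)"
  "transpose (blk21 M) = blk12 (transpose M)" "transpose (blk22 M) = blk22 (transpose M)"
  by (simp_all add: blk11_def blk12_def blk21_def blk22_def transpose_def vec_eq_iff)

lemma symmetric_blk21:
  assumes "transpose M = M"
  shows "blk21 M = transpose (blk12 M)"
  by (simp add: transpose_blk assms)

context
  fixes \<Omega>1 \<Omega>2 :: "real^('n::finite + 'n)^('n + 'n)" and \<rho> :: real
  assumes symmetric1: "transpose \<Omega>1 = \<Omega>1" and symmetric2: "transpose \<Omega>2 = \<Omega>2"
    and rho_pos: "0 < \<rho>" and denominator_ge: "\<rho> *\<^sub>R mat 1 \<preceq>\<^sub>L blk22 \<Omega>1 + blk11 \<Omega>2"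
begin

lemma circstar_blk11_le: "blk11 (\<Omega>1 \<circledast> \<Omega>2) \<preceq>\<^sub>L blk11 \<Omega>1"
  using loewner_le_diff_congruence[OF uniformly_pos_matrix_inv_nonneg[OF rho_pos denominator_ge]]
  by (simp add: blk_circstar symmetric_blk21[OF symmetric1])

lemma circstar_blk22_le: "blk22 (\<Omega>1 \<circledast> \<Omega>2) \<preceq>\<^sub>L blk22 \<Omega>2"
proof -
  have "blk12 \<Omega>2 = transpose (blk21 \<Omega>2)"
    by (simp add: symmetric_blk21[OF symmetric2])
  then show ?thesis
    using loewner_le_diff_congruence[OF uniformly_pos_matrix_inv_nonneg[OF rho_pos denominator_ge]]
    by (simp add: blk_circstar)
qed

lemma denominator_inverse_sandwich_le:
  assumes "Q \<preceq>\<^sub>L \<sigma> *\<^sub>R mat 1" "0 \<le> \<sigma>" "\<sigma> \<le> \<rho>\<^sup>2"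
  defines "S \<equiv> matrix_inv (blk22 \<Omega>1 + blk11 \<Omega>2)"
  shows "S ** Q ** S \<preceq>\<^sub>L mat 1"
proof -
  have symmetric: "transpose (blk22 \<Omega>1 + blk11 \<Omega>2) = blk22 \<Omega>1 + blk11 \<Omega>2"
    by (simp add: transpose_add transpose_blk symmetric1 symmetric2)
  then have "transpose S = S"
    unfolding S_def by (rule symmetric_inverse[OF uniformly_pos_matrix_inv[OF rho_pos denominator_ge]])
  then have "S ** Q ** S \<preceq>\<^sub>L \<sigma> *\<^sub>R (S ** S)"
    using loewner_le_congruence[OF assms(1), of S] unfolding congruence_scaleR_mat_1 by simp
  also have "\<dots> \<preceq>\<^sub>L (\<sigma> / \<rho>\<^sup>2) *\<^sub>R mat 1"
    using loewner_le_scaleR[OF uniformly_pos_matrix_inv_square_le[OF rho_pos denominator_ge symmetric] assms(2)]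
    by (simp add: S_def)
  also have "\<dots> \<preceq>\<^sub>L 1 *\<^sub>R mat 1"
    using assms(3) rho_pos by (intro scaleR_mat_1_loewner_le_mono) simp
  finally show ?thesis by simp
qed

lemma circstar_blk12_blk21_le:
  assumes "blk12 \<Omega>2 ** blk21 \<Omega>2 \<preceq>\<^sub>L \<sigma> *\<^sub>R mat 1" "0 \<le> \<sigma>" "\<sigma> \<le> \<rho>\<^sup>2"
  shows "blk12 (\<Omega>1 \<circledast> \<Omega>2) ** blk21 (\<Omega>1 \<circledast> \<Omega>2) \<preceq>\<^sub>L blk12 \<Omega>1 ** blk21 \<Omega>1"
  using loewner_le_congruence[OF denominator_inverse_sandwich_le[OF assms], of "blk12 \<Omega>1"]
  by (simp add: blk_circstar uminus_matrix_mul_uminus matrix_mul_assoc symmetric_blk21[OF symmetric1])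

lemma circstar_blk21_blk12_le:
  assumes "blk21 \<Omega>1 ** blk12 \<Omega>1 \<preceq>\<^sub>L \<sigma> *\<^sub>R mat 1" "0 \<le> \<sigma>" "\<sigma> \<le> \<rho>\<^sup>2"
  shows "blk21 (\<Omega>1 \<circledast> \<Omega>2) ** blk12 (\<Omega>1 \<circledast> \<Omega>2) \<preceq>\<^sub>L blk21 \<Omega>2 ** blk12 \<Omega>2"
proof -
  have "blk12 \<Omega>2 = transpose (blk21 \<Omega>2)"
    by (simp add: symmetric_blk21[OF symmetric2])
  then show ?thesis
    using loewner_le_congruence[OF denominator_inverse_sandwich_le[OF assms], of "blk21 \<Omega>2"]
    by (simp add: blk_circstar uminus_matrix_mul_uminus matrix_mul_assoc)
qed

lemma denominator_inverse_congruence_le: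
  assumes "B ** transpose B \<preceq>\<^sub>L \<sigma> *\<^sub>R mat 1"
  shows "B ** matrix_inv (blk22 \<Omega>1 + blk11 \<Omega>2) ** transpose B \<preceq>\<^sub>L (\<sigma> / \<rho>) *\<^sub>R mat 1"
proof -
  have "B ** matrix_inv (blk22 \<Omega>1 + blk11 \<Omega>2) ** transpose B \<preceq>\<^sub>L (1 / \<rho>) *\<^sub>R (B ** transpose B)"
    using loewner_le_congruence[OF uniformly_pos_matrix_inv_le[OF rho_pos denominator_ge]]
    by (simp add: congruence_scaleR_mat_1)
  also have "\<dots> \<preceq>\<^sub>L (1 / \<rho>) *\<^sub>R (\<sigma> *\<^sub>R mat 1)"
    using assms rho_pos by (intro loewner_le_scaleR) simp_all
  finally show ?thesis by simp
qed

lemma circstar_denominator_left_ge: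
  assumes "blk21 \<Omega>2 ** blk12 \<Omega>2 \<preceq>\<^sub>L \<sigma> *\<^sub>R mat 1"
    and "lam *\<^sub>R mat 1 \<preceq>\<^sub>L blk11 \<Omega>2 + blk22 \<Omega>2" and "\<sigma> / \<rho> \<le> lam - \<rho>"
  shows "\<rho> *\<^sub>R mat 1 \<preceq>\<^sub>L blk22 (\<Omega>1 \<circledast> \<Omega>2) + blk11 \<Omega>2"
proof -
  have "blk12 \<Omega>2 = transpose (blk21 \<Omega>2)"
    by (simp add: symmetric_blk21[OF symmetric2])
  then have "blk21 \<Omega>2 ** matrix_inv (blk22 \<Omega>1 + blk11 \<Omega>2) ** blk12 \<Omega>2 \<preceq>\<^sub>L (\<sigma> / \<rho>) *\<^sub>R mat 1"
    using denominator_inverse_congruence_le[of "blk21 \<Omega>2"] assms(1) by simp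
  from scaleR_mat_1_loewner_le_diff[OF assms(2) this] assms(3) show ?thesis
    by (simp add: blk_circstar algebra_simps)
qed

lemma circstar_denominator_right_ge:
  assumes "blk12 \<Omega>1 ** blk21 \<Omega>1 \<preceq>\<^sub>L \<sigma> *\<^sub>R mat 1"
    and "lam *\<^sub>R mat 1 \<preceq>\<^sub>L blk11 \<Omega>1 + blk22 \<Omega>1" and "\<sigma> / \<rho> \<le> lam - \<rho>"
  shows "\<rho> *\<^sub>R mat 1 \<preceq>\<^sub>L blk22 \<Omega>1 + blk11 (\<Omega>1 \<circledast> \<Omega>2)"
proof -
  have "blk12 \<Omega>1 ** matrix_inv (blk22 \<Omega>1 + blk11 \<Omega>2) ** blk21 \<Omega>1 \<preceq>\<^sub>L (\<sigma> / \<rho>) *\<^sub>R mat 1"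
    using denominator_inverse_congruence_le[of "blk12 \<Omega>1"] assms(1) by (simp add: symmetric_blk21[OF symmetric1])
  from scaleR_mat_1_loewner_le_diff[OF assms(2) this] assms(3) show ?thesis
    by (simp add: blk_circstar algebra_simps)
qed

end

lemma circstar_iterate_denominators_ge:
  fixes \<Omega> :: "nat \<Rightarrow> real^('n::finite + 'n)^('n + 'n)"
  assumes symmetric: "\<And>k. 1 \<le> k \<Longrightarrow> transpose (\<Omega> k) = \<Omega> k"
    and step_left: "\<And>k. 1 \<le> k \<Longrightarrow> \<Omega> (Suc k) = \<Omega> k \<circledast> \<Omega> 1"
    and step_right: "\<And>k. 1 \<le> k \<Longrightarrow> \<Omega> (Suc k) = \<Omega> 1 \<circledast> \<Omega> k"
    and rho_pos: "0 < \<rho>" and sigma_nonneg: "0 \<le> \<sigma>" and rho_bound: "\<sigma> / \<rho> \<le> lam - \<rho>"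
    and off_diagonal12: "blk12 (\<Omega> 1) ** blk21 (\<Omega> 1) \<preceq>\<^sub>L \<sigma> *\<^sub>R mat 1"
    and off_diagonal21: "blk21 (\<Omega> 1) ** blk12 (\<Omega> 1) \<preceq>\<^sub>L \<sigma> *\<^sub>R mat 1"
    and diagonal: "lam *\<^sub>R mat 1 \<preceq>\<^sub>L blk11 (\<Omega> 1) + blk22 (\<Omega> 1)"
    and "1 \<le> k"
  shows "\<rho> *\<^sub>R mat 1 \<preceq>\<^sub>L blk22 (\<Omega> k) + blk11 (\<Omega> 1)
       \<and> \<rho> *\<^sub>R mat 1 \<preceq>\<^sub>L blk22 (\<Omega> 1) + blk11 (\<Omega> k)"
  using \<open>1 \<le> k\<close>
proof (induction k rule: nat_induct_at_least)
  case base
  have "\<rho> *\<^sub>R mat 1 \<preceq>\<^sub>L lam *\<^sub>R mat 1"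
    using rho_bound divide_nonneg_pos[OF sigma_nonneg rho_pos] by (intro scaleR_mat_1_loewner_le_mono) linarith
  then have "\<rho> *\<^sub>R mat 1 \<preceq>\<^sub>L blk11 (\<Omega> 1) + blk22 (\<Omega> 1)"
    using diagonal by (rule loewner_le_trans)
  then show ?case
    by (simp add: add.commute)
next
  case (Suc k)
  have symmetric1: "transpose (\<Omega> 1) = \<Omega> 1" and symmetric_k: "transpose (\<Omega> k) = \<Omega> k"
    using symmetric Suc.hyps by auto
  show ?case
  proof
    show "\<rho> *\<^sub>R mat 1 \<preceq>\<^sub>L blk22 (\<Omega> (Suc k)) + blk11 (\<Omega> 1)"
      using circstar_denominator_left_ge[OF symmetric_k symmetric1 rho_pos _ off_diagonal21 diagonal rho_bound]
        Suc.IH step_left[OF Suc.hyps] by simp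
    show "\<rho> *\<^sub>R mat 1 \<preceq>\<^sub>L blk22 (\<Omega> 1) + blk11 (\<Omega> (Suc k))"
      using circstar_denominator_right_ge[OF symmetric1 symmetric_k rho_pos _ off_diagonal12 diagonal rho_bound]
        Suc.IH step_right[OF Suc.hyps] by simp
  qed
qed

lemma circstar_iterate_antitone:
  fixes \<Omega> :: "nat \<Rightarrow> real^('n::finite + 'n)^('n + 'n)"
  assumes symmetric: "\<And>k. 1 \<le> k \<Longrightarrow> transpose (\<Omega> k) = \<Omega> k"
    and step_left: "\<And>k. 1 \<le> k \<Longrightarrow> \<Omega> (Suc k) = \<Omega> k \<circledast> \<Omega> 1"
    and step_right: "\<And>k. 1 \<le> k \<Longrightarrow> \<Omega> (Suc k) = \<Omega> 1 \<circledast> \<Omega> k"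
    and rho_pos: "0 < \<rho>" and sigma_nonneg: "0 \<le> \<sigma>" and "\<sigma> \<le> \<rho>\<^sup>2"
    and rho_bound: "\<sigma> / \<rho> \<le> lam - \<rho>"
    and off_diagonal12: "blk12 (\<Omega> 1) ** blk21 (\<Omega> 1) \<preceq>\<^sub>L \<sigma> *\<^sub>R mat 1"
    and off_diagonal21: "blk21 (\<Omega> 1) ** blk12 (\<Omega> 1) \<preceq>\<^sub>L \<sigma> *\<^sub>R mat 1"
    and diagonal: "lam *\<^sub>R mat 1 \<preceq>\<^sub>L blk11 (\<Omega> 1) + blk22 (\<Omega> 1)"
    and "1 \<le> k"
  shows "blk11 (\<Omega> (Suc k)) \<preceq>\<^sub>L blk11 (\<Omega> k)
       \<and> blk22 (\<Omega> (Suc k)) \<preceq>\<^sub>L blk22 (\<Omega> k)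
       \<and> blk12 (\<Omega> (Suc k)) ** blk21 (\<Omega> (Suc k)) \<preceq>\<^sub>L blk12 (\<Omega> k) ** blk21 (\<Omega> k)
       \<and> blk21 (\<Omega> (Suc k)) ** blk12 (\<Omega> (Suc k)) \<preceq>\<^sub>L blk21 (\<Omega> k) ** blk12 (\<Omega> k)"
proof -
  have symmetric1: "transpose (\<Omega> 1) = \<Omega> 1" and symmetric_k: "transpose (\<Omega> k) = \<Omega> k"
    using symmetric \<open>1 \<le> k\<close> by auto
  obtain left: "\<rho> *\<^sub>R mat 1 \<preceq>\<^sub>L blk22 (\<Omega> k) + blk11 (\<Omega> 1)"
    and right: "\<rho> *\<^sub>R mat 1 \<preceq>\<^sub>L blk22 (\<Omega> 1) + blk11 (\<Omega> k)"
    using circstar_iterate_denominators_ge[OF assms(1-5,7-)] by blast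
  note left_step = step_left[OF \<open>1 \<le> k\<close>] and right_step = step_right[OF \<open>1 \<le> k\<close>]
  show ?thesis
    using circstar_blk11_le[OF symmetric_k symmetric1 rho_pos left]
      circstar_blk22_le[OF symmetric1 symmetric_k rho_pos right]
      circstar_blk12_blk21_le[OF symmetric_k symmetric1 rho_pos left off_diagonal12 sigma_nonneg \<open>\<sigma> \<le> \<rho>\<^sup>2\<close>]
      circstar_blk21_blk12_le[OF symmetric1 symmetric_k rho_pos right off_diagonal21 sigma_nonneg \<open>\<sigma> \<le> \<rho>\<^sup>2\<close>]
    unfolding left_step[symmetric] right_step[symmetric] by blast
qed

theorem theorem4p3:
  fixes Theta :: "nat \<Rightarrow> real^('n::finite + 'n)^('n + 'n)"
    and sigma lam rho :: real and p :: nat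
  assumes sym: "\<And>k. k \<ge> 1 \<Longrightarrow> transpose (Theta k) = Theta k"
    and semigroup: "\<And>k1 k2. k1 \<ge> 1 \<Longrightarrow> k2 \<ge> 1 \<Longrightarrow>
           pos_def (blk22 (Theta k1) + blk11 (Theta k2)) \<and> Theta (k1 + k2) = Theta k1 \<circledast> Theta k2"
    and sigma_pos: "sigma > 0" and lambda_pos: "lam > 0" and rho_pos: "rho > 0"
    and rho_sigma: "sigma / rho\<^sup>2 < 1"
    and rho_le: "rho \<le> lam - 2 * (sigma / rho) / (1 - sigma / rho\<^sup>2)"
    and p_pos: "p > 0"
    and h1: "blk12 (Theta p) ** blk21 (Theta p) \<preceq>\<^sub>L sigma *\<^sub>R mat 1"
    and h2: "blk21 (Theta p) ** blk12 (Theta p) \<preceq>\<^sub>L sigma *\<^sub>R mat 1"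
    and h3: "lam *\<^sub>R mat 1 \<preceq>\<^sub>L blk11 (Theta p) + blk22 (Theta p)"
  shows "\<forall>k::nat. k > 0 \<longrightarrow>
           blk11 (Theta ((k + 1) * p)) \<preceq>\<^sub>L blk11 (Theta (k * p))
         \<and> blk22 (Theta ((k + 1) * p)) \<preceq>\<^sub>L blk22 (Theta (k * p))
         \<and> blk12 (Theta ((k + 1) * p)) ** blk21 (Theta ((k + 1) * p))
             \<preceq>\<^sub>L blk12 (Theta (k * p)) ** blk21 (Theta (k * p))
         \<and> blk21 (Theta ((k + 1) * p)) ** blk12 (Theta ((k + 1) * p))
             \<preceq>\<^sub>L blk21 (Theta (k * p)) ** blk12 (Theta (k * p))"
proof -
  have sigma_le: "sigma \<le> rho\<^sup>2"
    using rho_sigma rho_pos by (simp add: divide_less_eq)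
  have "sigma / rho \<le> 2 * (sigma / rho) / (1 - sigma / rho\<^sup>2)"
    using rho_sigma sigma_pos rho_pos by (simp add: le_divide_eq)
  then have rho_bound: "sigma / rho \<le> lam - rho"
    using rho_le by linarith
  define \<Omega> where "\<Omega> k = Theta (k * p)" for k
  have \<Omega>_1: "\<Omega> 1 = Theta p"
    by (simp add: \<Omega>_def)
  have multiple_pos: "1 \<le> k * p" if "1 \<le> k" for k
    using that p_pos by simp
  have symmetric: "transpose (\<Omega> k) = \<Omega> k" if "1 \<le> k" for k
    using sym[OF multiple_pos[OF that]] by (simp add: \<Omega>_def)
  have step_left: "\<Omega> (Suc k) = \<Omega> k \<circledast> \<Omega> 1" if "1 \<le> k" for k
    using semigroup[of "k * p" p] multiple_pos[OF that] p_pos by (simp add: \<Omega>_def add.commute)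
  have step_right: "\<Omega> (Suc k) = \<Omega> 1 \<circledast> \<Omega> k" if "1 \<le> k" for k
    using semigroup[of p "k * p"] multiple_pos[OF that] p_pos by (simp add: \<Omega>_def)
  show ?thesis
    using circstar_iterate_antitone[OF symmetric step_left step_right rho_pos less_imp_le[OF sigma_pos]
        sigma_le rho_bound h1[folded \<Omega>_1] h2[folded \<Omega>_1] h3[folded \<Omega>_1]]
    by (simp add: \<Omega>_def)
qed

end
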